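(* Let $C$ be a sorting network on $n$ channels of depth $d$. Then there is a sorting network $N=L_1;\ldots;L_d$ on $n$ channels of the same depth $d$ whose last layer $L_d$ (i) only contains comparators between adjacent channels, i.e. of the form $(i,i+1)$, and (ii) does not contain two adjacent unused channels, i.e. there is no $i<n$ such that neither $i$ nor $i+1$ is used in $L_d$.
   Context: Channels are numbered $1,\ldots,n$. A comparator network of depth $d$ is a sequence $C=L_1;\ldots;L_d$ of layers; each layer is a set of comparators $(i,j)$ with $1\le i<j\le n$, each channel occurring in at most one comparator of a layer. An input $\bar x\in\{0,1\}^n$ propagates: $\bar x_0=\bar x$, and $\bar x_k$ is obtained from $\bar x_{k-1}$ by, for each $(i,j)\in L_k$, putting the minimum of the values at positions $i,j$ at position $i$ and the maximum at position $j$. The output is $C(\bar x)=\bar x_d$; $C$ is a sorting network if $C(\bar x)$ is sorted non-decreasingly for all $\bar x\in\{0,1\}^n$. A channel is used in a layer if it occurs in some comparator of that layer. *)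

theory Defs
  imports Main
begin

text \<open>Channels are 1..n; a comparator is a pair (i,j); a layer is a set of comparators;
  a comparator network is a list of layers (L_1 first). Boolean 0/1 values are modelled
  by bool (False = 0, True = 1), so min = conjunction, max = disjunction.\<close>

type_synonym comparator = "nat \<times> nat"
type_synonym layer = "comparator set"
type_synonym network = "layer list"

definition is_layer :: "nat \<Rightarrow> layer \<Rightarrow> bool" where
  "is_layer n L \<longleftrightarrow>
     (\<forall>(i,j)\<in>L. 1 \<le> i \<and> i < j \<and> j \<le> n) \<and>
     (\<forall>c\<in>L. \<forall>c'\<in>L. c \<noteq> c' \<longrightarrow>
        {fst c, snd c} \<inter> {fst c', snd c'} = {})"

definition is_network :: "nat \<Rightarrow> network \<Rightarrow> bool" where
  "is_network n C \<longleftrightarrow> (\<forall>L\<in>set C. is_layer n L)"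

definition used :: "layer \<Rightarrow> nat \<Rightarrow> bool" where
  "used L k \<longleftrightarrow> (\<exists>(i,j)\<in>L. k = i \<or> k = j)"

definition apply_layer :: "layer \<Rightarrow> (nat \<Rightarrow> bool) \<Rightarrow> (nat \<Rightarrow> bool)" where
  "apply_layer L x = (\<lambda>k.
     if \<exists>j. (k,j) \<in> L then x k \<and> x (THE j. (k,j) \<in> L)
     else if \<exists>i. (i,k) \<in> L then x (THE i. (i,k) \<in> L) \<or> x k
     else x k)"

definition run :: "network \<Rightarrow> (nat \<Rightarrow> bool) \<Rightarrow> (nat \<Rightarrow> bool)" where
  "run C x = fold apply_layer C x"

definition sorted_on :: "nat \<Rightarrow> (nat \<Rightarrow> bool) \<Rightarrow> bool" where
  "sorted_on n y \<longleftrightarrow> (\<forall>i j. 1 \<le> i \<and> i \<le> j \<and> j \<le> n \<longrightarrow> (y i \<longrightarrow> y j))"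

definition sorting_network :: "nat \<Rightarrow> network \<Rightarrow> bool" where
  "sorting_network n C \<longleftrightarrow> is_network n C \<and> (\<forall>x. sorted_on n (run C x))"

end

(* Let C = P; L be a sorting network and run P on pairwise distinct values. If a comparator
   (i,j) of L with j > i + 1 had to swap, the sorted output would carry on channel i + 1 an
   input value strictly between the two swapped values. Induct on the number of inversions of
   the input: exchanging two inverted input values a < b that are adjacent in value order
   leaves every threshold (0-1) input unchanged except at levels in (a, b], hence only
   exchanges a and b in the output of P; by induction the exchanged output is ordered at
   (i,j), so the swapped pair consists of exactly a and b, a contradiction. Long comparators of the
   last layer therefore never act and can be dropped, and comparators (i,i+1) on pairs of
   unused channels can be added, since they only act on an already sorted vector. *)

theory Submission
  imports Defs "HOL-Combinatorics.Permutations"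
begin

lemma layer_comparator_bounds: "is_layer n L \<Longrightarrow> (i,j) \<in> L \<Longrightarrow> 1 \<le> i \<and> i < j \<and> j \<le> n"
  unfolding is_layer_def by blast

lemma layer_comparators_disjoint:
  "is_layer n L \<Longrightarrow> c \<in> L \<Longrightarrow> c' \<in> L \<Longrightarrow> c \<noteq> c' \<Longrightarrow> {fst c, snd c} \<inter> {fst c', snd c'} = {}"
  unfolding is_layer_def by blast

lemma layer_fst_unique: "is_layer n L \<Longrightarrow> (i,j) \<in> L \<Longrightarrow> (i,j') \<in> L \<Longrightarrow> j' = j"
  using layer_comparators_disjoint[of n L "(i,j)" "(i,j')"] by auto

lemma layer_snd_unique: "is_layer n L \<Longrightarrow> (i,j) \<in> L \<Longrightarrow> (i',j) \<in> L \<Longrightarrow> i' = i"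
  using layer_comparators_disjoint[of n L "(i,j)" "(i',j)"] by auto

lemma layer_fst_not_snd: "is_layer n L \<Longrightarrow> (i,j) \<in> L \<Longrightarrow> (h,i) \<in> L \<Longrightarrow> False"
  using layer_comparators_disjoint[of n L "(i,j)" "(h,i)"] layer_comparator_bounds[of n L i j] by auto

lemma is_layer_subset: "is_layer n L \<Longrightarrow> L' \<subseteq> L \<Longrightarrow> is_layer n L'"
  unfolding is_layer_def by blast

definition partner :: "layer \<Rightarrow> nat \<Rightarrow> nat" where
  "partner L k = (if \<exists>j. (k,j) \<in> L then THE j. (k,j) \<in> L
                  else if \<exists>i. (i,k) \<in> L then THE i. (i,k) \<in> L else k)"

lemma partner_fst: "is_layer n L \<Longrightarrow> (k,j) \<in> L \<Longrightarrow> partner L k = j"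
  unfolding partner_def by (auto intro: the_equality dest: layer_fst_unique)

lemma partner_snd: "is_layer n L \<Longrightarrow> (i,k) \<in> L \<Longrightarrow> partner L k = i"
  unfolding partner_def by (auto intro: the_equality dest: layer_snd_unique layer_fst_not_snd)

lemma partner_unused: "\<not> used L k \<Longrightarrow> partner L k = k"
  unfolding partner_def used_def by auto

lemma layer_channel_cases [consumes 1, case_names fst snd unused]:
  assumes L: "is_layer n L"
  obtains (fst) j where "(k,j) \<in> L" "partner L k = j" "k < j"
    | (snd) i where "(i,k) \<in> L" "partner L k = i" "i < k"
    | (unused) "\<not> used L k" "partner L k = k"
proof (cases "used L k")
  case True
  then obtain i j where "(i,j) \<in> L" "k = i \<or> k = j"
    unfolding used_def by auto
  then show ?thesis
    using that partner_fst[OF L] partner_snd[OF L] layer_comparator_bounds[OF L] by blast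
qed (use that partner_unused in blast)

lemma partner_partner: "is_layer n L \<Longrightarrow> partner L (partner L k) = k"
  by (rule layer_channel_cases[of n L k]) (auto dest: partner_fst partner_snd)

lemma partner_in_channels: "is_layer n L \<Longrightarrow> k \<in> {1..n} \<Longrightarrow> partner L k \<in> {1..n}"
  by (rule layer_channel_cases[of n L k]) (auto dest: layer_comparator_bounds)

lemma partner_outside_channels: "is_layer n L \<Longrightarrow> k \<notin> {1..n} \<Longrightarrow> partner L k = k"
  by (rule layer_channel_cases[of n L k]) (auto dest: layer_comparator_bounds)

lemma less_partner_iff: "is_layer n L \<Longrightarrow> k < partner L k \<longleftrightarrow> (\<exists>j. (k,j) \<in> L)"
  by (rule layer_channel_cases[of n L k]) (auto dest: layer_fst_not_snd simp: used_def)

lemma apply_layer_partner: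
  assumes "is_layer n L"
  shows "apply_layer L x k =
    (if k < partner L k then x k \<and> x (partner L k) else x (partner L k) \<or> x k)"
proof -
  have "apply_layer L x k =
      (if \<exists>j. (k,j) \<in> L then x k \<and> x (partner L k) else x (partner L k) \<or> x k)"
    by (auto simp: apply_layer_def partner_def)
  then show ?thesis by (simp add: less_partner_iff[OF assms])
qed

text \<open>This agrees with the min/max semantics of apply_layer only when L is a layer.\<close>

definition apply_layer_val :: "layer \<Rightarrow> (nat \<Rightarrow> 'a::linorder) \<Rightarrow> nat \<Rightarrow> 'a" where
  "apply_layer_val L v k =
    (if k < partner L k then min (v k) (v (partner L k)) else max (v (partner L k)) (v k))"

definition run_val :: "network \<Rightarrow> (nat \<Rightarrow> 'a::linorder) \<Rightarrow> nat \<Rightarrow> 'a" where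
  "run_val C v = fold apply_layer_val C v"

definition threshold :: "'a::linorder \<Rightarrow> (nat \<Rightarrow> 'a) \<Rightarrow> nat \<Rightarrow> bool" where
  "threshold t v k \<longleftrightarrow> t \<le> v k"

lemma threshold_apply_layer_val:
  "is_layer n L \<Longrightarrow> threshold t (apply_layer_val L v) = apply_layer L (threshold t v)"
  by (auto simp: fun_eq_iff threshold_def apply_layer_val_def apply_layer_partner le_max_iff_disj)

lemma threshold_run_val:
  "is_network n C \<Longrightarrow> threshold t (run_val C v) = run C (threshold t v)"
  unfolding run_val_def run_def is_network_def
  by (induction C arbitrary: v) (auto simp: threshold_apply_layer_val[of n])

lemma run_val_snoc: "run_val (C @ [L]) v = apply_layer_val L (run_val C v)"
  by (simp add: run_val_def)

lemma sorting_network_sorts_values: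
  assumes "sorting_network n C" "1 \<le> p" "p \<le> q" "q \<le> n"
  shows "run_val C v p \<le> run_val C v q"
proof -
  have "is_network n C" "sorted_on n (run C (threshold (run_val C v p) v))"
    using assms(1) unfolding sorting_network_def by auto
  then have "sorted_on n (threshold (run_val C v p) (run_val C v))"
    by (simp add: threshold_run_val)
  then show ?thesis using assms(2-4) unfolding sorted_on_def threshold_def by blast
qed

text \<open>Only strictly inverted pairs are exchanged, which makes the exchange an involution
  also when the values on a comparator coincide.\<close>

definition layer_exchange :: "layer \<Rightarrow> (nat \<Rightarrow> 'a::linorder) \<Rightarrow> nat \<Rightarrow> nat" where
  "layer_exchange L v k =
    (if k < partner L k \<and> v (partner L k) < v k \<or> partner L k < k \<and> v k < v (partner L k)
     then partner L k else k)"

lemma apply_layer_val_exchange: "apply_layer_val L v = v \<circ> layer_exchange L v"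
  by (auto simp: fun_eq_iff apply_layer_val_def layer_exchange_def)

lemma layer_exchange_permutes:
  assumes L: "is_layer n L"
  shows "layer_exchange L v permutes {1..n}"
proof (rule bij_imp_permutes)
  let ?\<sigma> = "layer_exchange L v"
  have involution: "?\<sigma> (?\<sigma> k) = k" for k
    using partner_partner[OF L, of k] by (auto simp: layer_exchange_def)
  have "?\<sigma> ` {1..n} = {1..n}"
  proof
    show "?\<sigma> ` {1..n} \<subseteq> {1..n}"
      using partner_in_channels[OF L] by (auto simp: layer_exchange_def)
    then show "{1..n} \<subseteq> ?\<sigma> ` {1..n}"
      using involution by (metis image_subset_iff imageI subsetI)
  qed
  then show "bij_betw ?\<sigma> {1..n} {1..n}"
    using bij_betw_subset[OF involuntory_imp_bij[OF involution]] by blast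
  show "?\<sigma> k = k" if "k \<notin> {1..n}" for k
    using partner_outside_channels[OF L that] by (simp add: layer_exchange_def)
qed

lemma run_val_permutes:
  "is_network n C \<Longrightarrow> \<exists>\<pi>. \<pi> permutes {1..n} \<and> run_val C v = v \<circ> \<pi>"
proof (induction C arbitrary: v)
  case Nil
  then show ?case by (auto simp: run_val_def intro: permutes_id)
next
  case (Cons L C)
  then have L: "is_layer n L" and "is_network n C" by (auto simp: is_network_def)
  with Cons.IH obtain \<pi> where \<pi>: "\<pi> permutes {1..n}"
    and run_C: "run_val C (apply_layer_val L v) = apply_layer_val L v \<circ> \<pi>"
    by blast
  have "layer_exchange L v \<circ> \<pi> permutes {1..n}"
    using permutes_compose[OF \<pi> layer_exchange_permutes[OF L]] .
  moreover have "run_val (L # C) v = v \<circ> (layer_exchange L v \<circ> \<pi>)"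
    using run_C by (simp add: run_val_def apply_layer_val_exchange o_assoc)
  ultimately show ?case by blast
qed

lemma permutes_comp_image: "\<pi> permutes A \<Longrightarrow> (v \<circ> \<pi>) ` A = v ` A"
  by (metis image_comp permutes_image)

lemma permutes_comp_inj_on: "\<pi> permutes A \<Longrightarrow> inj_on v A \<Longrightarrow> inj_on (v \<circ> \<pi>) A"
  by (simp add: comp_inj_on permutes_image permutes_inj_on)

lemma run_val_image: "is_network n C \<Longrightarrow> run_val C v ` {1..n} = v ` {1..n}"
  using run_val_permutes permutes_comp_image by metis

lemma run_val_inj_on: "is_network n C \<Longrightarrow> inj_on v {1..n} \<Longrightarrow> inj_on (run_val C v) {1..n}"
  using run_val_permutes permutes_comp_inj_on by metis

lemma apply_layer_val_mono_on_id:
  assumes L: "is_layer n L" and v: "mono_on {1..n} v"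
  shows "apply_layer_val L v = v"
proof
  fix k
  show "apply_layer_val L v k = v k"
  proof (cases "k \<in> {1..n}")
    case True
    then have "partner L k \<in> {1..n}" using partner_in_channels[OF L] by blast
    then show ?thesis
      using mono_onD[OF v True] mono_onD[OF v _ True]
      by (auto simp: apply_layer_val_def min_def max_def)
  qed (simp add: apply_layer_val_def partner_outside_channels[OF L])
qed

lemma run_val_mono_on_id: "is_network n C \<Longrightarrow> mono_on {1..n} v \<Longrightarrow> run_val C v = v"
  unfolding run_val_def is_network_def
  by (induction C) (auto simp: apply_layer_val_mono_on_id)

definition inversions :: "nat \<Rightarrow> (nat \<Rightarrow> 'a::linorder) \<Rightarrow> (nat \<times> nat) set" where
  "inversions n v = {(r,s). r \<in> {1..n} \<and> s \<in> {1..n} \<and> r < s \<and> v s < v r}"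

lemma finite_inversions: "finite (inversions n v)"
  by (rule finite_subset[of _ "{1..n} \<times> {1..n}"]) (auto simp: inversions_def)

lemma inversions_empty_mono_on: "inversions n v = {} \<Longrightarrow> mono_on {1..n} v"
proof (rule mono_onI)
  fix r s assume "inversions n v = {}" "r \<in> {1..n}" "s \<in> {1..n}" "r \<le> s"
  then have "(r,s) \<notin> inversions n v" "r < s \<or> r = s" by auto
  with \<open>r \<in> {1..n}\<close> \<open>s \<in> {1..n}\<close> show "v r \<le> v s"
    by (auto simp: inversions_def)
qed

lemma inversion_of_adjacent_values:
  fixes v :: "nat \<Rightarrow> nat"
  assumes "inversions n v \<noteq> {}"
  obtains r s where "(r,s) \<in> inversions n v" "\<forall>k\<in>{1..n}. \<not> (v s < v k \<and> v k < v r)"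
proof -
  obtain r s where rs: "(r,s) \<in> inversions n v"
    and least: "\<And>r' s'. (r',s') \<in> inversions n v \<Longrightarrow> v r - v s \<le> v r' - v s'"
    using assms ex_has_least_nat[of "\<lambda>p. p \<in> inversions n v" _ "\<lambda>(r,s). v r - v s"]
    by fastforce
  have "\<not> (v s < v k \<and> v k < v r)" if k: "k \<in> {1..n}" for k
  proof
    assume between: "v s < v k \<and> v k < v r"
    then have "k \<noteq> r" by auto
    then have "(k,s) \<in> inversions n v \<or> (r,k) \<in> inversions n v"
      using rs k between by (auto simp: inversions_def)
    then show False
      using least[of k s] least[of r k] between by fastforce
  qed
  then show ?thesis using that rs by blast
qed

lemma inversions_transpose_adjacent_values:
  assumes inj: "inj_on v {1..n}" and rs: "(r,s) \<in> inversions n v"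
    and adjacent: "\<forall>k\<in>{1..n}. \<not> (v s < v k \<and> v k < v r)"
  shows "inversions n (v \<circ> transpose r s) = inversions n v - {(r,s)}"
proof -
  have r: "r \<in> {1..n}" and s: "s \<in> {1..n}" and "r < s" "v s < v r"
    using rs by (auto simp: inversions_def)
  have below: "v k < v s \<longleftrightarrow> v k < v r" and above: "v s < v k \<longleftrightarrow> v r < v k"
    if "1 \<le> k" "k \<le> n" "k \<noteq> r" "k \<noteq> s" for k
    using that adjacent inj_onD[OF inj, of k r] inj_onD[OF inj, of k s] r s \<open>v s < v r\<close>
    by (metis atLeastAtMost_iff less_trans linorder_neqE)+
  show ?thesis
    using \<open>r < s\<close> \<open>v s < v r\<close>
    by (auto simp: inversions_def transpose_def below above)
qed

lemma threshold_transpose_adjacent_values: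
  "v s < v r \<Longrightarrow> \<not> (v s < t \<and> t \<le> v r) \<Longrightarrow> threshold t (v \<circ> transpose r s) = threshold t v"
  by (auto simp: fun_eq_iff threshold_def transpose_def)

lemma eq_or_swapped_if_thresholds_agree:
  fixes a b x y :: nat
  assumes agree: "\<And>t. \<not> (a < t \<and> t \<le> b) \<Longrightarrow> t \<le> x \<longleftrightarrow> t \<le> y"
    and "\<not> (a < x \<and> x < b)" "\<not> (a < y \<and> y < b)"
  shows "y = x \<or> x = a \<and> y = b \<or> x = b \<and> y = a"
proof (cases x y rule: linorder_cases)
  case less
  then show ?thesis using agree[of y] agree[of "Suc x"] assms(2,3) by presburger
next
  case greater
  then show ?thesis using agree[of x] agree[of "Suc y"] assms(2,3) by presburger
qed simp

lemma run_val_transpose_adjacent_values: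
  fixes v :: "nat \<Rightarrow> nat"
  assumes P: "is_network n P" and rs: "(r,s) \<in> inversions n v"
    and adjacent: "\<forall>k\<in>{1..n}. \<not> (v s < v k \<and> v k < v r)" and k: "k \<in> {1..n}"
  shows "run_val P (v \<circ> transpose r s) k = run_val P v k
    \<or> run_val P v k = v s \<and> run_val P (v \<circ> transpose r s) k = v r
    \<or> run_val P v k = v r \<and> run_val P (v \<circ> transpose r s) k = v s"
proof (rule eq_or_swapped_if_thresholds_agree)
  have "r \<in> {1..n}" "s \<in> {1..n}" and less: "v s < v r"
    using rs by (auto simp: inversions_def)
  then have "run_val P (v \<circ> transpose r s) ` {1..n} = v ` {1..n}"
    using run_val_image[OF P] permutes_comp_image[OF permutes_swap_id] by metis
  then have "run_val P (v \<circ> transpose r s) k \<in> v ` {1..n}" "run_val P v k \<in> v ` {1..n}"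
    using k run_val_image[OF P, of v] by (metis imageI)+
  then show "\<not> (v s < run_val P v k \<and> run_val P v k < v r)"
    and "\<not> (v s < run_val P (v \<circ> transpose r s) k \<and> run_val P (v \<circ> transpose r s) k < v r)"
    using adjacent by auto
  show "t \<le> run_val P v k \<longleftrightarrow> t \<le> run_val P (v \<circ> transpose r s) k"
    if "\<not> (v s < t \<and> t \<le> v r)" for t
    using threshold_transpose_adjacent_values[of v s r t, OF less that]
    by (metis threshold_def threshold_run_val[OF P])
qed

lemma inverted_pair_of_value_swap:
  fixes a b x y x' y' :: "'a::linorder"
  assumes "a < b"
    and "x' = x \<or> x = a \<and> x' = b \<or> x = b \<and> x' = a"
    and "y' = y \<or> y = a \<and> y' = b \<or> y = b \<and> y' = a"
    and "\<not> (a < x \<and> x < b)" "\<not> (a < y \<and> y < b)" and "y < x" "x' \<le> y'"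
  shows "x = b \<and> y = a"
  using assms by auto

lemma swapped_long_comparator_value_between:
  assumes sn: "sorting_network n (P @ [L])" and ij: "(i,j) \<in> L" "i + 1 < j"
    and inj: "inj_on v {1..n}" and swapped: "run_val P v j < run_val P v i"
  shows "\<exists>k\<in>{1..n}. run_val P v j < v k \<and> v k < run_val P v i"
proof -
  have net: "is_network n (P @ [L])" and L: "is_layer n L"
    using sn by (auto simp: sorting_network_def is_network_def)
  have bounds: "1 \<le> i" "j \<le> n" using layer_comparator_bounds[OF L ij(1)] by auto
  define w where "w = run_val (P @ [L]) v"
  have "w i = run_val P v j" "w j = run_val P v i"
    using partner_fst[OF L ij(1)] partner_snd[OF L ij(1)] ij swapped
    by (auto simp: w_def run_val_snoc apply_layer_val_def)
  moreover have "w i \<le> w (i+1)" "w (i+1) \<le> w j"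
    using bounds ij(2) unfolding w_def by (auto intro: sorting_network_sorts_values[OF sn])
  moreover have "w i \<noteq> w (i+1)" "w (i+1) \<noteq> w j"
    using bounds ij(2) inj_onD[OF run_val_inj_on[OF net inj]] unfolding w_def by fastforce+
  moreover have "w (i+1) \<in> v ` {1..n}"
    using bounds ij(2) run_val_image[OF net, of v] unfolding w_def by auto
  ultimately show ?thesis by force
qed

lemma run_val_ordered_at_long_comparator:
  fixes v :: "nat \<Rightarrow> nat"
  assumes sn: "sorting_network n (P @ [L])" and ij: "(i,j) \<in> L" "i + 1 < j"
    and "inj_on v {1..n}"
  shows "run_val P v i \<le> run_val P v j"
  using assms(4)
proof (induction v rule: measure_induct_rule[where f = "\<lambda>v. card (inversions n v)"])
  case (less v)
  have P: "is_network n P" and L: "is_layer n L"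
    using sn by (auto simp: sorting_network_def is_network_def)
  have ij_channels: "i \<in> {1..n}" "j \<in> {1..n}" "i \<le> j"
    using layer_comparator_bounds[OF L ij(1)] by auto
  show ?case
  proof (cases "inversions n v = {}")
    case True
    then have "mono_on {1..n} v" by (rule inversions_empty_mono_on)
    then show ?thesis
      using run_val_mono_on_id[OF P] ij_channels by (metis mono_onD)
  next
    case False
    then obtain r s where rs: "(r,s) \<in> inversions n v"
      and adjacent: "\<forall>k\<in>{1..n}. \<not> (v s < v k \<and> v k < v r)"
      by (rule inversion_of_adjacent_values)
    have "r \<in> {1..n}" "s \<in> {1..n}" and less_rs: "v s < v r"
      using rs by (auto simp: inversions_def)
    then have inj': "inj_on (v \<circ> transpose r s) {1..n}"
      using permutes_comp_inj_on[OF permutes_swap_id less.prems] by blast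
    have "card (inversions n (v \<circ> transpose r s)) < card (inversions n v)"
      using inversions_transpose_adjacent_values[OF less.prems rs adjacent]
        card_Diff1_less[OF finite_inversions rs] by simp
    then have IH: "run_val P (v \<circ> transpose r s) i \<le> run_val P (v \<circ> transpose r s) j"
      using less.IH inj' by blast
    show ?thesis
    proof (rule ccontr)
      assume "\<not> ?thesis"
      then have swapped: "run_val P v j < run_val P v i" by simp
      have outside: "\<not> (v s < run_val P v k \<and> run_val P v k < v r)" if "k \<in> {1..n}" for k
      proof -
        have "run_val P v k \<in> v ` {1..n}" using that run_val_image[OF P, of v] by blast
        then show ?thesis using adjacent by auto
      qed
      have "run_val P v i = v r \<and> run_val P v j = v s"
        using inverted_pair_of_value_swap[OF less_rs
            run_val_transpose_adjacent_values[OF P rs adjacent ij_channels(1)]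
            run_val_transpose_adjacent_values[OF P rs adjacent ij_channels(2)]
            outside[OF ij_channels(1)] outside[OF ij_channels(2)] swapped IH] .
      then show False
        using swapped_long_comparator_value_between[OF sn ij less.prems swapped] adjacent
        by auto
    qed
  qed
qed

lemma run_ordered_at_long_comparator:
  assumes sn: "sorting_network n (P @ [L])" and ij: "(i,j) \<in> L" "i + 1 < j"
  shows "run P x i \<longrightarrow> run P x j"
proof -
  have P: "is_network n P" using sn by (simp add: sorting_network_def is_network_def)
  define v where "v r = (if x r then n + 1 + r else min r n)" for r
  have "threshold (n + 1) v = x" by (auto simp: fun_eq_iff threshold_def v_def)
  moreover have "inj_on v {1..n}" by (auto simp: inj_on_def v_def)
  then have "run_val P v i \<le> run_val P v j"
    using run_val_ordered_at_long_comparator[OF sn ij] by blast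
  then have "threshold (n + 1) (run_val P v) i \<longrightarrow> threshold (n + 1) (run_val P v) j"
    by (auto simp: threshold_def)
  ultimately show ?thesis by (simp add: threshold_run_val[OF P])
qed

lemma apply_layer_unused: "\<not> used L k \<Longrightarrow> apply_layer L x k = x k"
  unfolding used_def apply_layer_def by auto

lemma apply_layer_drop_inactive:
  assumes L: "is_layer n L" and sub: "L' \<subseteq> L"
    and inactive: "\<And>i j. (i,j) \<in> L - L' \<Longrightarrow> x i \<longrightarrow> x j"
  shows "apply_layer L' x = apply_layer L x"
proof
  fix k
  have L': "is_layer n L'" using is_layer_subset[OF L sub] .
  then show "apply_layer L' x k = apply_layer L x k"
  proof (cases rule: layer_channel_cases[of n L' k])
    case (fst j)
    then have "partner L k = j" using sub partner_fst[OF L] by blast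
    with fst show ?thesis by (simp add: apply_layer_partner[OF L] apply_layer_partner[OF L'])
  next
    case (snd i)
    then have "partner L k = i" using sub partner_snd[OF L] by blast
    with snd show ?thesis by (simp add: apply_layer_partner[OF L] apply_layer_partner[OF L'])
  next
    case unused
    from L show ?thesis
    proof (cases rule: layer_channel_cases[of n L k])
      case (fst j)
      then have "(k,j) \<in> L - L'" using unused by (auto simp: used_def)
      with fst unused show ?thesis
        using inactive by (auto simp: apply_layer_partner[OF L] apply_layer_unused)
    next
      case (snd i)
      then have "(i,k) \<in> L - L'" using unused by (auto simp: used_def)
      with snd unused show ?thesis
        using inactive by (auto simp: apply_layer_partner[OF L] apply_layer_unused)
    qed (simp add: unused apply_layer_unused)
  qed
qed

lemma unused_outside_sublayer:
  assumes L: "is_layer n L" and sub: "L' \<subseteq> L" and ij: "(i,j) \<in> L - L'"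
  shows "\<not> used L' i" "\<not> used L' j"
  using ij sub layer_comparators_disjoint[OF L, of "(i,j)"] unfolding used_def by fastforce+

lemma run_snoc: "run (C @ [L]) x = apply_layer L (run C x)"
  by (simp add: run_def)

lemma sorting_network_drop_long_comparators:
  assumes sn: "sorting_network n (P @ [L])"
  shows "sorting_network n (P @ [{(i,j) \<in> L. j = i + 1}])"
proof -
  have L: "is_layer n L" using sn by (simp add: sorting_network_def is_network_def)
  have "apply_layer {(i,j) \<in> L. j = i + 1} (run P x) = apply_layer L (run P x)" for x
  proof (rule apply_layer_drop_inactive[OF L])
    fix i j assume "(i,j) \<in> L - {(i,j) \<in> L. j = i + 1}"
    moreover from this have "i < j" using layer_comparator_bounds[OF L] by blast
    ultimately show "run P x i \<longrightarrow> run P x j"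
      using run_ordered_at_long_comparator[OF sn, of i j] by auto
  qed auto
  moreover have "is_layer n {(i,j) \<in> L. j = i + 1}"
    by (rule is_layer_subset[OF L]) auto
  ultimately show ?thesis
    using sn by (auto simp: sorting_network_def is_network_def run_snoc)
qed

lemma sorting_network_extend_last_layer:
  assumes sn: "sorting_network n (P @ [L])" and L': "is_layer n L'" and sub: "L \<subseteq> L'"
  shows "sorting_network n (P @ [L'])"
proof -
  have "apply_layer L (run P x) = apply_layer L' (run P x)" for x
  proof (rule apply_layer_drop_inactive[OF L' sub])
    fix i j assume ij: "(i,j) \<in> L' - L"
    have "sorted_on n (apply_layer L (run P x))"
      using sn by (simp add: sorting_network_def run_snoc)
    then have "apply_layer L (run P x) i \<longrightarrow> apply_layer L (run P x) j"
      using layer_comparator_bounds[OF L', of i j] ij unfolding sorted_on_def by (meson DiffD1 less_imp_le)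
    then show "run P x i \<longrightarrow> run P x j"
      using unused_outside_sublayer[OF L' sub ij] by (simp add: apply_layer_unused)
  qed
  then show ?thesis
    using sn L' by (auto simp: sorting_network_def is_network_def run_snoc)
qed

lemma is_layer_insert:
  assumes "is_layer n L" "1 \<le> a" "a < b" "b \<le> n" "\<not> used L a" "\<not> used L b"
  shows "is_layer n (insert (a,b) L)"
proof -
  have fresh: "{a, b} \<inter> {fst c, snd c} = {}" if "c \<in> L" for c
    using assms(5,6) that unfolding used_def by force
  have "1 \<le> i \<and> i < j \<and> j \<le> n" if "(i,j) \<in> insert (a,b) L" for i j
    using that assms(2-4) layer_comparator_bounds[OF assms(1)] by auto
  moreover have "{fst c, snd c} \<inter> {fst c', snd c'} = {}"
    if "c \<in> insert (a,b) L" "c' \<in> insert (a,b) L" "c \<noteq> c'" for c c'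
    using that fresh layer_comparators_disjoint[OF assms(1)] by fastforce
  ultimately show ?thesis unfolding is_layer_def by blast
qed

lemma adjacent_layer_extends_to_saturated:
  assumes "is_layer n L" "\<forall>(i,j)\<in>L. j = i + 1"
  obtains L' where "L \<subseteq> L'" "is_layer n L'" "\<forall>(i,j)\<in>L'. j = i + 1"
    "\<not> (\<exists>i. 1 \<le> i \<and> i < n \<and> \<not> used L' i \<and> \<not> used L' (i+1))"
proof -
  define S where "S = {L'. L \<subseteq> L' \<and> is_layer n L' \<and> (\<forall>(i,j)\<in>L'. j = i + 1)}"
  have "S \<subseteq> Pow ({1..n} \<times> {1..n})"
    unfolding S_def is_layer_def by auto
  then have "finite S" by (rule finite_subset) simp
  moreover have "L \<in> S" using assms unfolding S_def by blast
  ultimately obtain M where M: "M \<in> S" and maximal: "\<And>M'. M' \<in> S \<Longrightarrow> M \<subseteq> M' \<Longrightarrow> M = M'"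
    using finite_has_maximal[of S] by blast
  have "\<not> (\<exists>i. 1 \<le> i \<and> i < n \<and> \<not> used M i \<and> \<not> used M (i+1))"
  proof
    assume "\<exists>i. 1 \<le> i \<and> i < n \<and> \<not> used M i \<and> \<not> used M (i+1)"
    then obtain i where i: "1 \<le> i" "i < n" "\<not> used M i" "\<not> used M (i+1)" by blast
    then have "insert (i, i+1) M \<in> S"
      using M is_layer_insert[of n M i "i+1"] unfolding S_def by auto
    then have "(i, i+1) \<in> M" using maximal by blast
    then show False using i(3) by (auto simp: used_def)
  qed
  then show ?thesis using that M unfolding S_def by blast
qed

theorem lemma6:
  fixes n d :: nat and C :: network
  assumes "sorting_network n C" and "length C = d"
  shows "\<exists>N. sorting_network n N \<and> length N = d \<and>
           (d \<ge> 1 \<longrightarrow>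
              (\<forall>(i,j)\<in>last N. j = i + 1) \<and>
              \<not> (\<exists>i. 1 \<le> i \<and> i < n \<and> \<not> used (last N) i \<and> \<not> used (last N) (i+1)))"
proof (cases "C = []")
  case True
  then show ?thesis using assms by auto
next
  case False
  then obtain P L where C: "C = P @ [L]" by (metis rev_exhaust)
  let ?L\<^sub>1 = "{(i,j) \<in> L. j = i + 1}"
  have sn\<^sub>1: "sorting_network n (P @ [?L\<^sub>1])"
    using assms(1) C sorting_network_drop_long_comparators by simp
  then have "is_layer n ?L\<^sub>1" by (simp add: sorting_network_def is_network_def)
  then obtain L' where L': "?L\<^sub>1 \<subseteq> L'" "is_layer n L'" "\<forall>(i,j)\<in>L'. j = i + 1"
    "\<not> (\<exists>i. 1 \<le> i \<and> i < n \<and> \<not> used L' i \<and> \<not> used L' (i+1))"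
    by (rule adjacent_layer_extends_to_saturated) auto
  have "sorting_network n (P @ [L'])"
    using sorting_network_extend_last_layer[OF sn\<^sub>1 L'(2,1)] .
  moreover have "length (P @ [L']) = d" using assms(2) C by simp
  ultimately show ?thesis using L'(3,4) by (intro exI[of _ "P @ [L']"]) simp
qed

end
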